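(* Let $T$ be a tournament with $n$ vertices. Then in the dichromatic polynomial $P(T;x)$ the coefficient of $x^{n-1}$ is zero, and the coefficient of $x^{n-2}$ equals $-t$, where $t$ is the number of directed triangles of $T$.
   Context: A tournament is an orientation of a complete graph; a directed triangle is a directed cycle of length $3$. For a positive integer $k$, a proper $k$-coloring of a digraph $D$ is a map $c:V(D)\to\{1,\ldots,k\}$ such that each color class induces a subdigraph with no directed cycle. The number of proper $k$-colorings of $D$ is a polynomial in $k$, denoted $P(D;k)$ (the dichromatic polynomial). *)

theory Defs
  imports "HOL-Library.FuncSet" "HOL-Computational_Algebra.Polynomial"
begin

text \<open>A digraph is given by a finite vertex set V and an arc relation E (E u v: arc u to v).\<close>

definition tournament :: "'a set \<Rightarrow> ('a \<Rightarrow> 'a \<Rightarrow> bool) \<Rightarrow> bool" where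
  "tournament V E \<longleftrightarrow> finite V \<and>
     (\<forall>u v. E u v \<longrightarrow> u \<in> V \<and> v \<in> V) \<and>
     (\<forall>v. \<not> E v v) \<and>
     (\<forall>u\<in>V. \<forall>v\<in>V. u \<noteq> v \<longrightarrow> (E u v \<longleftrightarrow> \<not> E v u))"

definition induced_arcs :: "('a \<Rightarrow> 'a \<Rightarrow> bool) \<Rightarrow> 'a set \<Rightarrow> ('a \<times> 'a) set" where
  "induced_arcs E S = {(u, v). u \<in> S \<and> v \<in> S \<and> E u v}"

definition proper_colorings :: "'a set \<Rightarrow> ('a \<Rightarrow> 'a \<Rightarrow> bool) \<Rightarrow> nat \<Rightarrow> ('a \<Rightarrow> nat) set" where
  "proper_colorings V E k =
     {c \<in> V \<rightarrow>\<^sub>E {1..k}. \<forall>i \<in> {1..k}. acyclic (induced_arcs E {v \<in> V. c v = i})}"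

definition dichromatic_poly :: "'a set \<Rightarrow> ('a \<Rightarrow> 'a \<Rightarrow> bool) \<Rightarrow> int poly" where
  "dichromatic_poly V E =
     (THE p. \<forall>k::nat. k \<ge> 1 \<longrightarrow> poly p (int k) = int (card (proper_colorings V E k)))"

definition coeff_int :: "'b::zero poly \<Rightarrow> int \<Rightarrow> 'b" where
  "coeff_int p i = (if i < 0 then 0 else coeff p (nat i))"

definition num_directed_triangles :: "'a set \<Rightarrow> ('a \<Rightarrow> 'a \<Rightarrow> bool) \<Rightarrow> nat" where
  "num_directed_triangles V E =
     card {S. S \<subseteq> V \<and> (\<exists>a b c. S = {a, b, c} \<and> a \<noteq> b \<and> b \<noteq> c \<and> a \<noteq> c
                                  \<and> E a b \<and> E b c \<and> E c a)}"

end

theory Submission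
  imports Defs
begin

text \<open>In a tournament a vertex set induces an acyclic subdigraph iff it spans no directed
  triangle, so a proper colouring is a colouring in which no directed triangle is
  monochromatic. Inclusion-exclusion over sets \<open>F\<close> of directed triangles gives
  \<open>P(T;x) = \<Sum>\<^sub>F (-1)^|F| x^c(F)\<close>, where \<open>c(F)\<close> is the number of classes of the partition
  of \<open>V\<close> obtained by merging the triangles of \<open>F\<close>. The empty set contributes \<open>x^n\<close> and every
  single triangle \<open>-x^(n-2)\<close>; if \<open>F\<close> contains two distinct triangles then \<open>c(F) \<le> n - 3\<close>,
  since they lie either in one class of at least four vertices or in two classes of at least
  three.\<close>

lemma tournament_arcD:
  assumes "tournament V E" "E u v"
  shows "u \<in> V" "v \<in> V" "u \<noteq> v" "\<not> E v u"
  using assms unfolding tournament_def by metis+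

lemma tournament_arc_or_reverse:
  assumes "tournament V E" "u \<in> V" "v \<in> V" "u \<noteq> v"
  shows "E u v \<or> E v u"
  using assms unfolding tournament_def by metis

text \<open>Every cycle of a tournament can be shortcut: closing the path \<open>x \<rightarrow> z \<leadsto> y\<close> by
  \<open>y \<rightarrow> x\<close>, either \<open>z \<rightarrow> y\<close> gives the triangle \<open>x z y\<close> or \<open>y \<rightarrow> z\<close> closes the shorter path
  \<open>z \<leadsto> y\<close>.\<close>

lemma tournament_cycle_has_triangle:
  assumes T: "tournament V E" and SV: "S \<subseteq> V"
    and walk: "(x, y) \<in> (induced_arcs E S)\<^sup>+" and closing: "(y, x) \<in> induced_arcs E S"
  shows "\<exists>a\<in>S. \<exists>b\<in>S. \<exists>d\<in>S. E a b \<and> E b d \<and> E d a"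
  using walk closing
proof (induction rule: converse_trancl_induct)
  case (base x)
  then show ?case using tournament_arcD(4)[OF T] by (auto simp: induced_arcs_def)
next
  case (step x z)
  have xz: "E x z" "x \<in> S" "z \<in> S" and yx: "E y x" "y \<in> S"
    using step.hyps(1) step.prems by (auto simp: induced_arcs_def)
  have "z \<noteq> y" using xz yx tournament_arcD(4)[OF T] by blast
  then have "E z y \<or> E y z" using tournament_arc_or_reverse[OF T] xz yx SV by blast
  then show ?case
  proof
    assume "E z y"
    then show ?thesis using xz yx by blast
  next
    assume "E y z"
    then show ?thesis using step.IH xz yx by (auto simp: induced_arcs_def)
  qed
qed

lemma tournament_acyclic_induced_iff:
  assumes T: "tournament V E" and SV: "S \<subseteq> V"
  shows "acyclic (induced_arcs E S) \<longleftrightarrow> \<not> (\<exists>a\<in>S. \<exists>b\<in>S. \<exists>d\<in>S. E a b \<and> E b d \<and> E d a)"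
proof
  assume "acyclic (induced_arcs E S)"
  then show "\<not> (\<exists>a\<in>S. \<exists>b\<in>S. \<exists>d\<in>S. E a b \<and> E b d \<and> E d a)"
    unfolding acyclic_def induced_arcs_def by (blast intro: trancl_into_trancl)
next
  assume no_triangle: "\<not> (\<exists>a\<in>S. \<exists>b\<in>S. \<exists>d\<in>S. E a b \<and> E b d \<and> E d a)"
  show "acyclic (induced_arcs E S)"
    unfolding acyclic_def
  proof (intro allI notI)
    fix x assume "(x, x) \<in> (induced_arcs E S)\<^sup>+"
    then obtain z where "(x, z) \<in> (induced_arcs E S)\<^sup>*" and zx: "(z, x) \<in> induced_arcs E S"
      by (blast dest: tranclD2)
    moreover have "z \<noteq> x" using zx tournament_arcD(3)[OF T] by (auto simp: induced_arcs_def)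
    ultimately have "(x, z) \<in> (induced_arcs E S)\<^sup>+" by (auto simp: rtrancl_eq_or_trancl)
    then show False using tournament_cycle_has_triangle[OF T SV _ zx] no_triangle by blast
  qed
qed

definition directed_triangles :: "'a set \<Rightarrow> ('a \<Rightarrow> 'a \<Rightarrow> bool) \<Rightarrow> 'a set set" where
  "directed_triangles V E =
     {S. S \<subseteq> V \<and> (\<exists>a b c. S = {a, b, c} \<and> a \<noteq> b \<and> b \<noteq> c \<and> a \<noteq> c
                                  \<and> E a b \<and> E b c \<and> E c a)}"

definition monochromatic :: "('a \<Rightarrow> 'b) \<Rightarrow> 'a set \<Rightarrow> bool" where
  "monochromatic c S \<longleftrightarrow> (\<forall>u\<in>S. \<forall>v\<in>S. c u = c v)"

lemma num_directed_triangles_eq_card: "num_directed_triangles V E = card (directed_triangles V E)"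
  unfolding num_directed_triangles_def directed_triangles_def ..

lemma directed_triangles_subset_Pow:
  "directed_triangles V E \<subseteq> Pow V"
  unfolding directed_triangles_def by blast

lemma card_directed_triangle: "S \<in> directed_triangles V E \<Longrightarrow> card S = 3"
  unfolding directed_triangles_def by force

lemma tournament_monochromatic_triangle_iff:
  assumes T: "tournament V E"
  shows "(\<exists>S\<in>directed_triangles V E. monochromatic c S) \<longleftrightarrow>
         (\<exists>a b d. E a b \<and> E b d \<and> E d a \<and> c a = c b \<and> c b = c d)"
proof
  assume "\<exists>S\<in>directed_triangles V E. monochromatic c S"
  then obtain a b d where "E a b" "E b d" "E d a" "monochromatic c {a, b, d}"
    unfolding directed_triangles_def by auto
  then show "\<exists>a b d. E a b \<and> E b d \<and> E d a \<and> c a = c b \<and> c b = c d"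
    unfolding monochromatic_def by blast
next
  assume "\<exists>a b d. E a b \<and> E b d \<and> E d a \<and> c a = c b \<and> c b = c d"
  then obtain a b d where abd: "E a b" "E b d" "E d a" "c a = c b" "c b = c d" by blast
  have "a \<noteq> b" "b \<noteq> d" "a \<noteq> d" "a \<in> V" "b \<in> V" "d \<in> V"
    using abd tournament_arcD[OF T] by metis+
  then have "{a, b, d} \<in> directed_triangles V E"
    using abd unfolding directed_triangles_def by auto
  moreover have "monochromatic c {a, b, d}" using abd unfolding monochromatic_def by auto
  ultimately show "\<exists>S\<in>directed_triangles V E. monochromatic c S" by blast
qed

lemma tournament_proper_colorings:
  assumes T: "tournament V E"
  shows "proper_colorings V E k =
         {c \<in> V \<rightarrow>\<^sub>E {1..k}. \<forall>S\<in>directed_triangles V E. \<not> monochromatic c S}"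
proof -
  have "(\<forall>i\<in>{1..k}. acyclic (induced_arcs E {v \<in> V. c v = i})) \<longleftrightarrow>
        \<not> (\<exists>a b d. E a b \<and> E b d \<and> E d a \<and> c a = c b \<and> c b = c d)"
    if c: "c \<in> V \<rightarrow>\<^sub>E {1..k}" for c
  proof -
    have "acyclic (induced_arcs E {v \<in> V. c v = i}) \<longleftrightarrow>
          \<not> (\<exists>a b d. E a b \<and> E b d \<and> E d a \<and> c a = i \<and> c b = i \<and> c d = i)" for i
      using tournament_acyclic_induced_iff[OF T, of "{v \<in> V. c v = i}"] tournament_arcD(1)[OF T]
      by blast
    moreover have "c a \<in> {1..k}" if "E a b" for a b
      using c tournament_arcD(1)[OF T that] by blast
    ultimately show ?thesis by (smt (verit))
  qed
  then show ?thesis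
    unfolding proper_colorings_def tournament_monochromatic_triangle_iff[OF T, symmetric] by blast
qed

text \<open>The number of classes of this equivalence is the exponent \<open>c(F)\<close> above.\<close>

definition block_equiv :: "'a set \<Rightarrow> 'a set set \<Rightarrow> ('a \<times> 'a) set" where
  "block_equiv V F = Id_on V \<union> (\<Union>S\<in>F. S \<times> S)\<^sup>+"

lemma equiv_block_equiv:
  assumes "\<Union>F \<subseteq> V"
  shows "equiv V (block_equiv V F)"
proof (rule equivI)
  have "(\<Union>S\<in>F. S \<times> S)\<^sup>+ \<subseteq> V \<times> V"
    using assms by (intro trancl_subset_Sigma) blast
  then show "block_equiv V F \<subseteq> V \<times> V" "refl_on V (block_equiv V F)"
    unfolding block_equiv_def refl_on_def by blast+
  have "sym ((\<Union>S\<in>F. S \<times> S)\<^sup>+)" by (rule sym_trancl) (auto simp: sym_def)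
  then show "sym (block_equiv V F)" unfolding block_equiv_def sym_def by blast
  show "trans (block_equiv V F)"
    unfolding block_equiv_def trans_def by (blast intro: trancl_trans)
qed

lemma monochromatic_iff_respects_block_equiv:
  "(\<forall>S\<in>F. monochromatic c S) \<longleftrightarrow> (\<forall>(u, v)\<in>block_equiv V F. c u = c v)"
proof
  assume mono: "\<forall>S\<in>F. monochromatic c S"
  have "c u = c v" if "(u, v) \<in> (\<Union>S\<in>F. S \<times> S)\<^sup>+" for u v
    using that by induction (use mono in \<open>auto simp: monochromatic_def\<close>)
  then show "\<forall>(u, v)\<in>block_equiv V F. c u = c v" unfolding block_equiv_def by auto
next
  assume "\<forall>(u, v)\<in>block_equiv V F. c u = c v"
  then show "\<forall>S\<in>F. monochromatic c S"
    unfolding block_equiv_def monochromatic_def by blast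
qed

text \<open>A map constant on the classes of \<open>R\<close> is the same as a map on \<open>V // R\<close>.\<close>

lemma card_PiE_respecting_equiv:
  assumes eq: "equiv V R" and "finite V"
  shows "card {c \<in> V \<rightarrow>\<^sub>E A. \<forall>(u, v)\<in>R. c u = c v} = card A ^ card (V // R)"
proof -
  define lift where "lift g = (\<lambda>v\<in>V. g (R `` {v}))" for g :: "'a set \<Rightarrow> 'b"
  have "bij_betw lift (V // R \<rightarrow>\<^sub>E A) {c \<in> V \<rightarrow>\<^sub>E A. \<forall>(u, v)\<in>R. c u = c v}"
  proof (rule bij_betw_imageI)
    show "inj_on lift (V // R \<rightarrow>\<^sub>E A)"
    proof (rule inj_onI)
      fix g g' assume g: "g \<in> V // R \<rightarrow>\<^sub>E A" and g': "g' \<in> V // R \<rightarrow>\<^sub>E A"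
        and lift_eq: "lift g = lift g'"
      show "g = g'"
      proof (rule extensionalityI[of _ "V // R"])
        show "g \<in> extensional (V // R)" "g' \<in> extensional (V // R)"
          using g g' by (simp_all add: PiE_iff)
        fix X assume "X \<in> V // R"
        then obtain v where "v \<in> V" "X = R `` {v}" by (rule quotientE)
        then show "g X = g' X" using fun_cong[OF lift_eq, of v] by (simp add: lift_def)
      qed
    qed
    show "lift ` (V // R \<rightarrow>\<^sub>E A) = {c \<in> V \<rightarrow>\<^sub>E A. \<forall>(u, v)\<in>R. c u = c v}"
    proof (intro equalityI subsetI)
      fix c assume "c \<in> lift ` (V // R \<rightarrow>\<^sub>E A)"
      then show "c \<in> {c \<in> V \<rightarrow>\<^sub>E A. \<forall>(u, v)\<in>R. c u = c v}"
        using equiv_class_eq[OF eq] equiv_type[OF eq]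
        by (fastforce simp: lift_def quotientI)
    next
      fix c assume c: "c \<in> {c \<in> V \<rightarrow>\<^sub>E A. \<forall>(u, v)\<in>R. c u = c v}"
      have class_image: "c ` (R `` {v}) = {c v}" if "v \<in> V" for v
        using c equiv_class_self[OF eq that] by auto
      define g where "g = (\<lambda>X\<in>V // R. the_elem (c ` X))"
      have "g \<in> V // R \<rightarrow>\<^sub>E A" using c class_image by (auto simp: g_def elim!: quotientE)
      moreover have "lift g = c"
        using c class_image by (auto simp: lift_def g_def quotientI PiE_iff extensional_def)
      ultimately show "c \<in> lift ` (V // R \<rightarrow>\<^sub>E A)" by blast
    qed
  qed
  then have "card {c \<in> V \<rightarrow>\<^sub>E A. \<forall>(u, v)\<in>R. c u = c v} = card (V // R \<rightarrow>\<^sub>E A)"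
    by (simp add: bij_betw_same_card)
  also have "\<dots> = card A ^ card (V // R)"
    using assms by (simp add: card_PiE finite_quotient equiv_type)
  finally show ?thesis .
qed

lemma card_quotient_add_excess:
  assumes eq: "equiv V R" and fin: "finite V"
  shows "card (V // R) + (\<Sum>X\<in>V // R. card X - 1) = card V"
proof -
  have fin_class: "finite X" and card_class: "card X \<ge> 1" if "X \<in> V // R" for X
    using in_quotient_imp_subset[OF eq that] in_quotient_imp_non_empty[OF eq that] fin
    by (auto intro: finite_subset simp: Suc_le_eq card_gt_0_iff)
  have "card V = (\<Sum>X\<in>V // R. card X)"
    using card_Union_disjoint[of "V // R"] Union_quotient[OF eq] quotient_disj[OF eq] fin_class
    by (auto simp: pairwise_def disjnt_def)
  also have "\<dots> = (\<Sum>X\<in>V // R. 1 + (card X - 1))"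
    by (rule sum.cong) (use card_class in force)+
  also have "\<dots> = card (V // R) + (\<Sum>X\<in>V // R. card X - 1)"
    unfolding sum.distrib by simp
  finally show ?thesis ..
qed

lemma card_quotient_add_excess_le:
  assumes eq: "equiv V R" and fin: "finite V" and Q: "Q \<subseteq> V // R"
  shows "card (V // R) + (\<Sum>X\<in>Q. card X - 1) \<le> card V"
proof -
  have "(\<Sum>X\<in>Q. card X - 1) \<le> (\<Sum>X\<in>V // R. card X - 1)"
    using Q finite_quotient[OF fin equiv_type[OF eq]] by (intro sum_mono2) auto
  then show ?thesis using card_quotient_add_excess[OF eq fin] by linarith
qed

lemma subset_block_equiv_class:
  assumes "S \<in> F" "a \<in> S"
  shows "S \<subseteq> block_equiv V F `` {a}"
  using assms unfolding block_equiv_def by blast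

lemma card_quotient_block_equiv_empty: "card (V // block_equiv V {}) = card V"
proof -
  have "V // block_equiv V {} = (\<lambda>x. {x}) ` V"
    unfolding block_equiv_def quotient_def by auto
  then show ?thesis by (simp add: card_image)
qed

lemma card_quotient_block_equiv_singleton:
  assumes SV: "S \<subseteq> V" and "S \<noteq> {}" and fin: "finite V"
  shows "card (V // block_equiv V {S}) + card S = card V + 1"
proof -
  have "trans (S \<times> S)" unfolding trans_def by blast
  then have "block_equiv V {S} = Id_on V \<union> S \<times> S" unfolding block_equiv_def by simp
  then have "V // block_equiv V {S} = insert S ((\<lambda>x. {x}) ` (V - S))"
    using assms unfolding quotient_def by auto
  moreover have "S \<notin> (\<lambda>x. {x}) ` (V - S)" using \<open>S \<noteq> {}\<close> by auto
  ultimately have "card (V // block_equiv V {S}) = card (V - S) + 1"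
    using fin by (simp add: card_image)
  moreover have "card (V - S) + card S = card V"
    using fin SV by (metis card_Diff_subset card_mono finite_subset le_add_diff_inverse2)
  moreover have "card S \<ge> 1" using assms by (auto simp: Suc_le_eq card_gt_0_iff intro: finite_subset)
  ultimately show ?thesis by linarith
qed

text \<open>Either both sets lie in one class, which then has more than \<open>card S\<^sub>1\<close> elements, or they
  lie in two classes with at least \<open>card S\<^sub>1\<close> elements each.\<close>

lemma card_quotient_block_equiv_two_blocks:
  assumes FV: "\<Union>F \<subseteq> V" and fin: "finite V" and S: "S\<^sub>1 \<in> F" "S\<^sub>2 \<in> F" "S\<^sub>1 \<noteq> S\<^sub>2"
    and same_card: "card S\<^sub>1 = card S\<^sub>2" and two: "card S\<^sub>1 \<ge> 2"
  shows "card (V // block_equiv V F) + card S\<^sub>1 \<le> card V"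
proof -
  define R where "R = block_equiv V F"
  have eq: "equiv V R" unfolding R_def using equiv_block_equiv[OF FV] .
  have "S\<^sub>1 \<subseteq> V" "S\<^sub>2 \<subseteq> V" using S FV by blast+
  then have fin_S: "finite S\<^sub>1" "finite S\<^sub>2" using fin by (simp_all add: finite_subset)
  have "S\<^sub>1 \<noteq> {}" "S\<^sub>2 \<noteq> {}" using two same_card by auto
  then obtain a\<^sub>1 a\<^sub>2 where a: "a\<^sub>1 \<in> S\<^sub>1" "a\<^sub>2 \<in> S\<^sub>2" by blast
  define X\<^sub>1 X\<^sub>2 where "X\<^sub>1 = R `` {a\<^sub>1}" and "X\<^sub>2 = R `` {a\<^sub>2}"
  have "a\<^sub>1 \<in> V" "a\<^sub>2 \<in> V" using a S FV by blast+
  then have X: "X\<^sub>1 \<in> V // R" "X\<^sub>2 \<in> V // R" unfolding X\<^sub>1_def X\<^sub>2_def by (simp_all add: quotientI)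
  have fin_X: "finite X\<^sub>1" "finite X\<^sub>2"
    using X in_quotient_imp_subset[OF eq] fin by (meson finite_subset)+
  have sub: "S\<^sub>1 \<subseteq> X\<^sub>1" "S\<^sub>2 \<subseteq> X\<^sub>2"
    unfolding X\<^sub>1_def X\<^sub>2_def R_def
    by (rule subset_block_equiv_class[OF S(1) a(1)] subset_block_equiv_class[OF S(2) a(2)])+
  show ?thesis
  proof (cases "X\<^sub>1 = X\<^sub>2")
    case True
    have "\<not> S\<^sub>2 \<subseteq> S\<^sub>1" using card_subset_eq[OF fin_S(1)] S(3) same_card by metis
    then have "S\<^sub>1 \<subset> S\<^sub>1 \<union> S\<^sub>2" by blast
    then have "card S\<^sub>1 < card (S\<^sub>1 \<union> S\<^sub>2)" using fin_S by (simp add: psubset_card_mono)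
    also have "\<dots> \<le> card X\<^sub>1" using sub True fin_X by (intro card_mono) auto
    moreover have "card (V // R) + (card X\<^sub>1 - 1) \<le> card V"
      using card_quotient_add_excess_le[OF eq fin, of "{X\<^sub>1}"] X by simp
    ultimately show ?thesis unfolding R_def by linarith
  next
    case False
    have "card S\<^sub>1 \<le> card X\<^sub>1" "card S\<^sub>2 \<le> card X\<^sub>2" using sub fin_X by (auto intro: card_mono)
    moreover have "card (V // R) + ((card X\<^sub>1 - 1) + (card X\<^sub>2 - 1)) \<le> card V"
      using card_quotient_add_excess_le[OF eq fin, of "{X\<^sub>1, X\<^sub>2}"] X False by simp
    ultimately show ?thesis using same_card two unfolding R_def by linarith
  qed
qed

lemma finite_directed_triangles: "finite V \<Longrightarrow> finite (directed_triangles V E)"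
  by (rule finite_subset[OF directed_triangles_subset_Pow]) simp

lemma card_quotient_block_equiv_triangle:
  assumes "S \<in> directed_triangles V E" and "finite V"
  shows "card (V // block_equiv V {S}) + 2 = card V"
proof -
  have "S \<subseteq> V" "card S = 3"
    using assms(1) directed_triangles_subset_Pow card_directed_triangle by blast+
  then show ?thesis using card_quotient_block_equiv_singleton[OF _ _ assms(2), of S] by fastforce
qed

lemma card_quotient_block_equiv_two_triangles:
  assumes F: "F \<subseteq> directed_triangles V E" and "finite V"
    and S: "S\<^sub>1 \<in> F" "S\<^sub>2 \<in> F" "S\<^sub>1 \<noteq> S\<^sub>2"
  shows "card (V // block_equiv V F) + 3 \<le> card V"
proof -
  have "\<Union>F \<subseteq> V" using F directed_triangles_subset_Pow by blast
  moreover have "card S\<^sub>1 = 3" "card S\<^sub>2 = 3" using F S card_directed_triangle by blast+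
  ultimately show ?thesis
    using card_quotient_block_equiv_two_blocks[OF _ \<open>finite V\<close> S] by simp
qed

lemma int_card_avoiding_all:
  assumes fin_C: "finite C" and fin_I: "finite I"
  shows "int (card {c \<in> C. \<forall>i\<in>I. \<not> P i c}) =
         (\<Sum>J\<in>Pow I. (-1) ^ card J * int (card {c \<in> C. \<forall>i\<in>J. P i c}))"
proof -
  define f where "f X = int (card (X \<inter> C))" for X
  define G where "G i = {c. P i c}" for i
  have f_additive: "f (X \<union> Y) = f X + f Y" if "disjnt X Y" for X Y
  proof -
    have "disjnt (X \<inter> C) (Y \<inter> C)" using that by (auto simp: disjnt_def)
    then show ?thesis
      unfolding f_def using fin_C by (simp add: Int_Un_distrib2 card_Un_disjnt)
  qed
  have f_Inter: "f (\<Inter> (G ` J)) = int (card {c \<in> C. \<forall>i\<in>J. P i c})" for J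
    unfolding f_def G_def by (rule arg_cong[where f = "\<lambda>X. int (card X)"]) blast
  have "{c \<in> C. \<forall>i\<in>I. \<not> P i c} = C - \<Union> (G ` I) \<inter> C" unfolding G_def by blast
  then have "int (card {c \<in> C. \<forall>i\<in>I. \<not> P i c}) = f (\<Inter> (G ` {})) - f (\<Union> (G ` I))"
    unfolding f_def using fin_C by (simp add: card_Diff_subset of_nat_diff card_mono)
  also have "\<dots> = f (\<Inter> (G ` {})) +
      (\<Sum>J | J \<subseteq> I \<and> J \<noteq> {}. (-1) ^ card J * f (\<Inter> (G ` J)))"
    using Incl_Excl_UN[OF f_additive fin_I, of G] by (simp add: sum_negf[symmetric])
  also have "\<dots> = (\<Sum>J\<in>Pow I. (-1) ^ card J * f (\<Inter> (G ` J)))"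
  proof -
    have "Pow I = insert {} {J. J \<subseteq> I \<and> J \<noteq> {}}" by auto
    then show ?thesis using fin_I by simp
  qed
  finally show ?thesis unfolding f_Inter .
qed

lemma int_card_colorings_without_monochromatic:
  assumes fin_V: "finite V" and fin_A: "finite A" and \<F>: "\<Union>\<F> \<subseteq> V"
  shows "int (card {c \<in> V \<rightarrow>\<^sub>E A. \<forall>S\<in>\<F>. \<not> monochromatic c S}) =
         (\<Sum>F\<in>Pow \<F>. (-1) ^ card F * int (card A) ^ card (V // block_equiv V F))"
proof -
  have "finite \<F>" using \<F> fin_V by (meson Sup_le_iff finite_Pow_iff finite_subset subset_Pow_Union)
  then have "int (card {c \<in> V \<rightarrow>\<^sub>E A. \<forall>S\<in>\<F>. \<not> monochromatic c S}) =
      (\<Sum>F\<in>Pow \<F>. (-1) ^ card F * int (card {c \<in> V \<rightarrow>\<^sub>E A. \<forall>S\<in>F. monochromatic c S}))"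
    using fin_V fin_A by (intro int_card_avoiding_all) (simp_all add: finite_PiE)
  also have "\<dots> = (\<Sum>F\<in>Pow \<F>. (-1) ^ card F * int (card A) ^ card (V // block_equiv V F))"
  proof (rule sum.cong[OF refl])
    fix F assume "F \<in> Pow \<F>"
    then have FV: "\<Union>F \<subseteq> V" using \<F> by blast
    have "card {c \<in> V \<rightarrow>\<^sub>E A. \<forall>S\<in>F. monochromatic c S} = card A ^ card (V // block_equiv V F)"
      unfolding monochromatic_iff_respects_block_equiv[where V = V]
      by (rule card_PiE_respecting_equiv[OF equiv_block_equiv[OF FV] fin_V])
    then show "(-1) ^ card F * int (card {c \<in> V \<rightarrow>\<^sub>E A. \<forall>S\<in>F. monochromatic c S}) =
        (-1) ^ card F * int (card A) ^ card (V // block_equiv V F)" by simp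
  qed
  finally show ?thesis .
qed

lemma dichromatic_poly_eqI:
  assumes p: "\<And>k. k \<ge> 1 \<Longrightarrow> poly p (int k) = int (card (proper_colorings V E k))"
  shows "dichromatic_poly V E = p"
  unfolding dichromatic_poly_def
proof (rule the_equality)
  show "\<forall>k. k \<ge> 1 \<longrightarrow> poly p (int k) = int (card (proper_colorings V E k))" using p by blast
next
  fix q assume q: "\<forall>k. k \<ge> 1 \<longrightarrow> poly q (int k) = int (card (proper_colorings V E k))"
  have "int ` {1..} \<subseteq> {x. poly (q - p) x = 0}" using p q by auto
  moreover have "infinite (int ` {1::nat..})"
    by (simp add: finite_image_iff infinite_Ici)
  ultimately have "infinite {x. poly (q - p) x = 0}" using finite_subset by blast
  then show "q = p" using poly_roots_finite[of "q - p"] by auto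
qed

lemma dichromatic_poly_tournament:
  assumes T: "tournament V E"
  shows "dichromatic_poly V E =
    (\<Sum>F\<in>Pow (directed_triangles V E). monom ((-1) ^ card F) (card (V // block_equiv V F)))"
    (is "_ = ?p")
proof (rule dichromatic_poly_eqI)
  fix k :: nat
  have "finite V" using T by (simp add: tournament_def)
  moreover have "\<Union>(directed_triangles V E) \<subseteq> V" using directed_triangles_subset_Pow by blast
  ultimately show "poly ?p (int k) = int (card (proper_colorings V E k))"
    using int_card_colorings_without_monochromatic[of V "{1..k}" "directed_triangles V E"]
    by (simp add: tournament_proper_colorings[OF T] poly_sum poly_monom)
qed

lemma coeff_signed_subset_sum:
  fixes cf :: "'b set \<Rightarrow> nat"
  assumes fin: "finite \<F>" and empty: "cf {} = n" and single: "\<And>S. S \<in> \<F> \<Longrightarrow> cf {S} + 2 = n"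
    and many: "\<And>F S\<^sub>1 S\<^sub>2. F \<subseteq> \<F> \<Longrightarrow> S\<^sub>1 \<in> F \<Longrightarrow> S\<^sub>2 \<in> F \<Longrightarrow> S\<^sub>1 \<noteq> S\<^sub>2 \<Longrightarrow> cf F + 3 \<le> n"
    and m: "m < n" "n \<le> m + 2"
  shows "coeff (\<Sum>F\<in>Pow \<F>. monom ((-1) ^ card F) (cf F) :: int poly) m =
         (if m + 2 = n then - int (card \<F>) else 0)"
proof -
  have summand: "(if cf F = m then (-1) ^ card F else 0) =
                 (if m + 2 = n \<and> card F = 1 then -1 else (0::int))" if F: "F \<subseteq> \<F>" for F
  proof -
    consider "F = {}" | S where "F = {S}" | S\<^sub>1 S\<^sub>2 where "S\<^sub>1 \<in> F" "S\<^sub>2 \<in> F" "S\<^sub>1 \<noteq> S\<^sub>2"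
      by blast
    then show ?thesis
    proof cases
      case 1
      then show ?thesis using empty m by simp
    next
      case (2 S)
      then show ?thesis using single[of S] F by auto
    next
      case 3
      then have "card F \<noteq> 1" by (auto simp: card_1_singleton_iff)
      then show ?thesis using many[OF F 3] m by auto
    qed
  qed
  have "coeff (\<Sum>F\<in>Pow \<F>. monom ((-1) ^ card F) (cf F) :: int poly) m =
        (\<Sum>F\<in>Pow \<F>. if cf F = m then (-1) ^ card F else 0)"
    by (simp add: coeff_sum)
  also have "\<dots> = (\<Sum>F\<in>Pow \<F>. if m + 2 = n \<and> card F = 1 then -1 else 0)"
    using summand by (intro sum.cong) auto
  also have "\<dots> = (if m + 2 = n then - int (card {F \<in> Pow \<F>. card F = 1}) else 0)"
    using fin by (simp add: sum.If_cases Int_def)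
  also have "{F \<in> Pow \<F>. card F = 1} = (\<lambda>S. {S}) ` \<F>"
    by (auto simp: card_1_singleton_iff)
  finally show ?thesis by (simp add: card_image)
qed

lemma coeff_int_signed_subset_sum:
  fixes cf :: "'b set \<Rightarrow> nat"
  assumes fin: "finite \<F>" and empty: "cf {} = n" and single: "\<And>S. S \<in> \<F> \<Longrightarrow> cf {S} + 2 = n"
    and many: "\<And>F S\<^sub>1 S\<^sub>2. F \<subseteq> \<F> \<Longrightarrow> S\<^sub>1 \<in> F \<Longrightarrow> S\<^sub>2 \<in> F \<Longrightarrow> S\<^sub>1 \<noteq> S\<^sub>2 \<Longrightarrow> cf F + 3 \<le> n"
  defines "p \<equiv> (\<Sum>F\<in>Pow \<F>. monom ((-1) ^ card F) (cf F) :: int poly)"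
  shows "coeff_int p (int n - 1) = 0" and "coeff_int p (int n - 2) = - int (card \<F>)"
proof -
  note coeff = coeff_signed_subset_sum[OF fin empty single many, folded p_def]
  show "coeff_int p (int n - 1) = 0"
    using coeff[where m = "n - 1"] by (cases "n = 0") (simp_all add: coeff_int_def nat_diff_distrib)
  show "coeff_int p (int n - 2) = - int (card \<F>)"
  proof (cases "n \<ge> 2")
    case True
    then show ?thesis using coeff[where m = "n - 2"] by (simp add: coeff_int_def nat_diff_distrib)
  next
    case False
    then have "S \<notin> \<F>" for S using single[of S] by linarith
    then have "\<F> = {}" by blast
    then show ?thesis using False by (simp add: coeff_int_def)
  qed
qed

theorem mainTheorem8:
  fixes V :: "'a set" and E :: "'a \<Rightarrow> 'a \<Rightarrow> bool"
  assumes "tournament V E"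
  defines "n \<equiv> int (card V)"
  shows "coeff_int (dichromatic_poly V E) (n - 1) = 0 \<and>
         coeff_int (dichromatic_poly V E) (n - 2) = - int (num_directed_triangles V E)"
proof -
  have "finite V" using assms(1) by (simp add: tournament_def)
  then show ?thesis
    unfolding dichromatic_poly_tournament[OF assms(1)] num_directed_triangles_eq_card n_def
    using coeff_int_signed_subset_sum[where cf = "\<lambda>F. card (V // block_equiv V F)",
        OF finite_directed_triangles card_quotient_block_equiv_empty
        card_quotient_block_equiv_triangle card_quotient_block_equiv_two_triangles]
    by simp
qed

end
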